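(* Let $n\ge1$ and $\alpha,\beta,u,v\in V_n$. There exists a valid rectangular pattern with tiles in $\mathcal T'_n$ whose right, top, left and bottom labels are respectively $\tau_n(\alpha)$, $\tau_n(\beta)$, $\tau_n(u)$ and $\tau_n(v)$ if and only if the Wang tile $(\alpha,\beta,u,v)$ (right $\alpha$, top $\beta$, left $u$, bottom $v$) belongs to $\mathcal T'_n$.
   Context: Write $\bar m=m+1$. $V_n=\{(v_0,v_1,v_2)\in\mathbb{Z}^3: 0\le v_0\le v_1\le 1,\ v_1\le v_2\le n+1\}$, elements written as words $v_0v_1v_2$. A Wang tile is $t=(a,b,c,d)$ with $\mathrm{RIGHT}(t)=a$, $\mathrm{TOP}(t)=b$, $\mathrm{LEFT}(t)=c$, $\mathrm{BOTTOM}(t)=d$; $\hat t=(b,a,d,c)$, $\hat S=\{\hat t:t\in S\}$. Define (as (right, top, left, bottom)): $W_n=\{(11(i+1),11(j+1),11i,11j):1\le i,j\le n\}$; $B'_n=\{(00(i+1),111,00i,11n):0\le i\le n\}$; $G_n=\{(01(i+1),111,00i,11(n+1)):0\le i\le n\}$; $Y_n=\{(01(i+1),112,01i,11(n+1)):1\le i\le n\}$; $A_n=\{(00(i+1),112,01i,11n):1\le i\le n\}$; $J'_n=\{((0,k,l),(0,r,s),(0,s,r+n),(0,l,k+n)):(k,l),(r,s)\in\{(0,0),(0,1),(1,1)\}\}$. $\mathcal T'_n=W_n\cup B'_n\cup G_n\cup Y_n\cup A_n\cup\hat B'_n\cup\hat G_n\cup\hat Y_n\cup\hat A_n\cup J'_n$.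 A rectangular pattern is valid if adjacent tiles agree on common edges; its bottom (top) labels are those of its bottom (top) row read left to right, its left (right) labels those of its left (right) column read bottom to top. $\tau_n:V_n\to V_n^*$ is $\tau_n(xyz)=(0,x-y+1,n)\cdot(11n)^{z-x-1}\cdot(11\bar n)^{n+1-z}$ if $x\ne z$, and $\tau_n(xyz)=(0,x-y+1,n+1)\cdot(11\bar n)^{n-z}$ if $x=z$. *)

theory Defs
  imports Main
begin

type_synonym label = "int \<times> int \<times> int"
type_synonym tile = "label \<times> label \<times> label \<times> label"

definition RIGHT :: "tile \<Rightarrow> label" where "RIGHT t = (case t of (a,b,c,d) \<Rightarrow> a)"
definition TOP :: "tile \<Rightarrow> label" where "TOP t = (case t of (a,b,c,d) \<Rightarrow> b)"
definition LEFT :: "tile \<Rightarrow> label" where "LEFT t = (case t of (a,b,c,d) \<Rightarrow> c)"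
definition BOTTOM :: "tile \<Rightarrow> label" where "BOTTOM t = (case t of (a,b,c,d) \<Rightarrow> d)"

definition hat :: "tile \<Rightarrow> tile" where "hat t = (case t of (a,b,c,d) \<Rightarrow> (b,a,d,c))"

definition Vn :: "nat \<Rightarrow> label set" where
  "Vn n = {(v0,v1,v2). 0 \<le> v0 \<and> v0 \<le> v1 \<and> v1 \<le> 1 \<and> v1 \<le> v2 \<and> v2 \<le> int n + 1}"

definition Wn :: "nat \<Rightarrow> tile set" where
  "Wn n = {((1,1,i+1),(1,1,j+1),(1,1,i),(1,1,j)) | i j. 1 \<le> i \<and> i \<le> int n \<and> 1 \<le> j \<and> j \<le> int n}"
definition Bn' :: "nat \<Rightarrow> tile set" where
  "Bn' n = {((0,0,i+1),(1,1,1),(0,0,i),(1,1,int n)) | i. 0 \<le> i \<and> i \<le> int n}"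
definition Gn :: "nat \<Rightarrow> tile set" where
  "Gn n = {((0,1,i+1),(1,1,1),(0,0,i),(1,1,int n+1)) | i. 0 \<le> i \<and> i \<le> int n}"
definition Yn :: "nat \<Rightarrow> tile set" where
  "Yn n = {((0,1,i+1),(1,1,2),(0,1,i),(1,1,int n+1)) | i. 1 \<le> i \<and> i \<le> int n}"
definition An :: "nat \<Rightarrow> tile set" where
  "An n = {((0,0,i+1),(1,1,2),(0,1,i),(1,1,int n)) | i. 1 \<le> i \<and> i \<le> int n}"
definition Jn' :: "nat \<Rightarrow> tile set" where
  "Jn' n = {((0,k,l),(0,r,s),(0,s,r+int n),(0,l,k+int n)) | k l r s.
             (k,l) \<in> {(0,0),(0,1),(1,1)} \<and> (r,s) \<in> {(0,0),(0,1),(1,1)}}"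

definition Tn' :: "nat \<Rightarrow> tile set" where
  "Tn' n = Wn n \<union> Bn' n \<union> Gn n \<union> Yn n \<union> An n
           \<union> hat ` Bn' n \<union> hat ` Gn n \<union> hat ` Yn n \<union> hat ` An n \<union> Jn' n"

(* A rectangular pattern of width w and height h: P i j is the tile in column i
   (0 = leftmost) and row j (0 = bottom row). *)
definition valid_pattern :: "tile set \<Rightarrow> nat \<Rightarrow> nat \<Rightarrow> (nat \<Rightarrow> nat \<Rightarrow> tile) \<Rightarrow> bool" where
  "valid_pattern T w h P \<longleftrightarrow> 0 < w \<and> 0 < h \<and>
     (\<forall>i<w. \<forall>j<h. P i j \<in> T) \<and>
     (\<forall>i j. i + 1 < w \<longrightarrow> j < h \<longrightarrow> RIGHT (P i j) = LEFT (P (i+1) j)) \<and>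
     (\<forall>i j. i < w \<longrightarrow> j + 1 < h \<longrightarrow> TOP (P i j) = BOTTOM (P i (j+1)))"

definition bottom_labels :: "nat \<Rightarrow> nat \<Rightarrow> (nat \<Rightarrow> nat \<Rightarrow> tile) \<Rightarrow> label list" where
  "bottom_labels w h P = map (\<lambda>i. BOTTOM (P i 0)) [0..<w]"
definition top_labels :: "nat \<Rightarrow> nat \<Rightarrow> (nat \<Rightarrow> nat \<Rightarrow> tile) \<Rightarrow> label list" where
  "top_labels w h P = map (\<lambda>i. TOP (P i (h-1))) [0..<w]"
definition left_labels :: "nat \<Rightarrow> nat \<Rightarrow> (nat \<Rightarrow> nat \<Rightarrow> tile) \<Rightarrow> label list" where
  "left_labels w h P = map (\<lambda>j. LEFT (P 0 j)) [0..<h]"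
definition right_labels :: "nat \<Rightarrow> nat \<Rightarrow> (nat \<Rightarrow> nat \<Rightarrow> tile) \<Rightarrow> label list" where
  "right_labels w h P = map (\<lambda>j. RIGHT (P (w-1) j)) [0..<h]"

definition tau :: "nat \<Rightarrow> label \<Rightarrow> label list" where
  "tau n v = (case v of (x,y,z) \<Rightarrow>
     if x \<noteq> z then
       (0, x-y+1, int n) # replicate (nat (z-x-1)) (1,1,int n) @ replicate (nat (int n+1-z)) (1,1,int n+1)
     else
       (0, x-y+1, int n+1) # replicate (nat (int n - z)) (1,1,int n+1))"

end

(*
  Every tile of T'_n is determined by its left and bottom labels, so a valid pattern is
  determined by its left and bottom boundary.  For the boundaries tau_n(u) and tau_n(v) this
  forces an explicit pattern: a J' tile in the corner, tiles of B', G, Y, A along the bottom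
  row and their hats along the left column, and W tiles in the interior, whose counters grow
  by one per step.  A pattern with the required boundary therefore exists iff the right column
  and top row of this pattern carry tau_n(alpha) and tau_n(beta).  Comparing entries and
  distinguishing the first components of u and v, this happens exactly for the tiles of W_n
  (u0 = v0 = 1), of B', G, Y, A and their hats (u0 <> v0), and of J' (u0 = v0 = 0); in these
  cases all tiles of the explicit pattern lie in T'_n.
*)

theory Submission
  imports Defs
begin

lemma all_less_nat_succ_iff:
  fixes m :: int
  assumes "0 \<le> m"
  shows "(\<forall>j < nat (m + 1). P j) \<longleftrightarrow> P 0 \<and> (\<forall>j. 0 < j \<and> j \<le> m \<longrightarrow> P (nat j))"
proof safe
  fix j :: nat assume "P 0" "\<forall>j. 0 < j \<and> j \<le> m \<longrightarrow> P (nat j)" "j < nat (m + 1)"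
  then show "P j" by (cases "j = 0") (auto dest: spec[of _ "int j"])
qed (use assms in auto)

lemma threshold_eq:
  fixes s t m :: int
  assumes "\<And>j. 0 < j \<Longrightarrow> j \<le> m \<Longrightarrow> s \<le> j \<longleftrightarrow> t \<le> j"
    and "1 \<le> s" "s \<le> m + 1" "1 \<le> t" "t \<le> m + 1"
  shows "s = t"
  using assms(1)[of s] assms(1)[of t] assms(2-5) by linarith

definition sw_deterministic :: "tile set \<Rightarrow> bool" where
  "sw_deterministic T \<longleftrightarrow>
     (\<forall>t\<in>T. \<forall>t'\<in>T. LEFT t = LEFT t' \<longrightarrow> BOTTOM t = BOTTOM t' \<longrightarrow> t = t')"

lemma sw_deterministic_graph: "sw_deterministic {t. t = f (LEFT t) (BOTTOM t)}"
  unfolding sw_deterministic_def by auto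

lemma length_left_labels [simp]: "length (left_labels w h P) = h"
  and length_bottom_labels [simp]: "length (bottom_labels w h P) = w"
  by (simp_all add: left_labels_def bottom_labels_def)

lemma valid_pattern_mono:
  "T \<subseteq> T' \<Longrightarrow> valid_pattern T w h P \<Longrightarrow> valid_pattern T' w h P"
  unfolding valid_pattern_def by blast

lemma valid_pattern_restrict:
  "valid_pattern T w h P \<Longrightarrow> (\<And>i j. i < w \<Longrightarrow> j < h \<Longrightarrow> P i j \<in> T') \<Longrightarrow> valid_pattern T' w h P"
  unfolding valid_pattern_def by blast

lemma valid_patterns_agree:
  assumes det: "sw_deterministic T"
    and P: "valid_pattern T w h P" and Q: "valid_pattern T w h Q"
    and left: "left_labels w h P = left_labels w h Q"
    and bottom: "bottom_labels w h P = bottom_labels w h Q"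
  shows "i < w \<Longrightarrow> j < h \<Longrightarrow> P i j = Q i j"
proof (induction "i + j" arbitrary: i j rule: less_induct)
  case less
  have "LEFT (P i j) = LEFT (Q i j)"
  proof (cases i)
    case 0
    then show ?thesis
      using arg_cong[OF left, of "\<lambda>xs. xs ! j"] \<open>j < h\<close> by (simp add: left_labels_def)
  next
    case (Suc i')
    then have "RIGHT (P i' j) = RIGHT (Q i' j)"
      using less by simp
    then show ?thesis
      using P Q less.prems Suc unfolding valid_pattern_def by (metis Suc_eq_plus1)
  qed
  moreover have "BOTTOM (P i j) = BOTTOM (Q i j)"
  proof (cases j)
    case 0
    then show ?thesis
      using arg_cong[OF bottom, of "\<lambda>xs. xs ! i"] \<open>i < w\<close> by (simp add: bottom_labels_def)
  next
    case (Suc j')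
    then have "TOP (P i j') = TOP (Q i j')"
      using less by simp
    then show ?thesis
      using P Q less.prems Suc unfolding valid_pattern_def by (metis Suc_eq_plus1)
  qed
  moreover have "P i j \<in> T" "Q i j \<in> T"
    using P Q less.prems unfolding valid_pattern_def by auto
  ultimately show ?case
    using det unfolding sw_deterministic_def by blast
qed

lemma agreeing_patterns_labels_eq:
  assumes "0 < w" "0 < h" "\<And>i j. i < w \<Longrightarrow> j < h \<Longrightarrow> P i j = Q i j"
  shows "right_labels w h P = right_labels w h Q" "top_labels w h P = top_labels w h Q"
  using assms by (auto simp: right_labels_def top_labels_def)

lemma sides_hat [simp]:
  "RIGHT (hat t) = TOP t" "TOP (hat t) = RIGHT t" "LEFT (hat t) = BOTTOM t" "BOTTOM (hat t) = LEFT t"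
  by (cases t; simp add: hat_def RIGHT_def TOP_def LEFT_def BOTTOM_def)+

lemma hat_in_Tn': "t \<in> Tn' n \<Longrightarrow> hat t \<in> Tn' n"
  unfolding Tn'_def by (elim UnE) (auto simp: Wn_def Jn'_def hat_def)

lemma swapped_tile_in_Tn'_iff: "(b, a, v, u) \<in> Tn' n \<longleftrightarrow> (a, b, u, v) \<in> Tn' n"
  using hat_in_Tn'[of "(a, b, u, v)" n] hat_in_Tn'[of "(b, a, v, u)" n] by (auto simp: hat_def)

fun determined_tile :: "nat \<Rightarrow> label \<Rightarrow> label \<Rightarrow> tile" where
  "determined_tile n (l0, l1, l2) (b0, b1, b2) =
    (if l0 = 0 then
       if b0 = 0 then ((0, b2 - int n, b1), (0, l2 - int n, l1), (l0, l1, l2), (b0, b1, b2))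
       else ((0, b2 - int n, l2 + 1), (1, 1, l1 + 1), (l0, l1, l2), (b0, b1, b2))
     else
       if b0 = 0 then ((1, 1, b1 + 1), (0, l2 - int n, b2 + 1), (l0, l1, l2), (b0, b1, b2))
       else ((1, 1, l2 + 1), (1, 1, b2 + 1), (l0, l1, l2), (b0, b1, b2)))"

lemma Tn'_determined_by_left_bottom: "Tn' n \<subseteq> {t. t = determined_tile n (LEFT t) (BOTTOM t)}"
  unfolding Tn'_def Wn_def Bn'_def Gn_def Yn_def An_def Jn'_def hat_def LEFT_def BOTTOM_def
  by auto

lemma tau_not_Nil [simp]: "tau n x \<noteq> []"
  by (auto simp: tau_def split: prod.splits)

lemma length_tau:
  assumes "(x, y, z) \<in> Vn n" "n \<ge> 1"
  shows "length (tau n (x, y, z)) = nat (int n + 1 - x)"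
  using assms unfolding Vn_def tau_def by auto

lemma nth_tau:
  assumes "(x, y, z) \<in> Vn n" "j < length (tau n (x, y, z))"
  shows "tau n (x, y, z) ! j =
    (if j = 0 then (0, x - y + 1, if z = x then int n + 1 else int n)
     else (1, 1, if int j \<ge> z - x then int n + 1 else int n))"
  using assms unfolding Vn_def tau_def by (auto simp: nth_append nth_Cons split: nat.splits)

fun canonical_pattern :: "nat \<Rightarrow> label \<Rightarrow> label \<Rightarrow> nat \<Rightarrow> nat \<Rightarrow> tile" where
  "canonical_pattern n (u0, u1, u2) (v0, v1, v2) i j =
    (let pu = u2 - u0; pv = v2 - v0; qu = u0 - u1 + 1; qv = v0 - v1 + 1; x = int i; y = int j in
     if x = 0 \<and> y = 0 then
       ((0, of_bool (pv = 0), qv), (0, of_bool (pu = 0), qu),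
        (0, qu, int n + of_bool (pu = 0)), (0, qv, int n + of_bool (pv = 0)))
     else if y = 0 then
       ((0, of_bool (x \<ge> pv), qv + x), (1, 1, 1 + of_bool (x > pv)),
        (0, of_bool (x > pv), qv + x - 1), (1, 1, int n + of_bool (x \<ge> pv)))
     else if x = 0 then
       ((1, 1, 1 + of_bool (y > pu)), (0, of_bool (y \<ge> pu), qu + y),
        (1, 1, int n + of_bool (y \<ge> pu)), (0, of_bool (y > pu), qu + y - 1))
     else
       ((1, 1, x + 1 + of_bool (y > pu)), (1, 1, y + 1 + of_bool (x > pv)),
        (1, 1, x + of_bool (y > pu)), (1, 1, y + of_bool (x > pv))))"

declare canonical_pattern.simps [simp del]

lemma canonical_pattern_swap: "canonical_pattern n u v i j = hat (canonical_pattern n v u j i)"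
  by (cases u; cases v) (auto simp: canonical_pattern.simps Let_def hat_def)

lemma canonical_pattern_determined:
  "canonical_pattern n u v i j =
     determined_tile n (LEFT (canonical_pattern n u v i j)) (BOTTOM (canonical_pattern n u v i j))"
  by (cases u; cases v) (auto simp: canonical_pattern.simps Let_def LEFT_def BOTTOM_def)

lemma LEFT_canonical_pattern:
  assumes "u \<in> Vn n" "v \<in> Vn n" "j < length (tau n u)"
  shows "LEFT (canonical_pattern n u v i j) =
    (if i = 0 then tau n u ! j else RIGHT (canonical_pattern n u v (i - 1) j))"
proof -
  obtain u0 u1 u2 where u: "u = (u0, u1, u2)" by (cases u)
  obtain v0 v1 v2 where v: "v = (v0, v1, v2)" by (cases v)
  show ?thesis
    using assms nth_tau[of u0 u1 u2 n j] unfolding u v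
    by (auto simp: canonical_pattern.simps Let_def LEFT_def RIGHT_def Vn_def)
qed

lemma BOTTOM_canonical_pattern:
  assumes "u \<in> Vn n" "v \<in> Vn n" "i < length (tau n v)"
  shows "BOTTOM (canonical_pattern n u v i j) =
    (if j = 0 then tau n v ! i else TOP (canonical_pattern n u v i (j - 1)))"
  using LEFT_canonical_pattern[OF assms(2,1,3), of j]
  by (simp add: canonical_pattern_swap[of n u v] canonical_pattern_swap[of n u v i "j - 1"])

lemma canonical_pattern_valid:
  assumes "u \<in> Vn n" "v \<in> Vn n" "n \<ge> 1"
  defines "w \<equiv> length (tau n v)" and "h \<equiv> length (tau n u)"
  shows "valid_pattern {t. t = determined_tile n (LEFT t) (BOTTOM t)} w h (canonical_pattern n u v)"
    and "left_labels w h (canonical_pattern n u v) = tau n u"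
    and "bottom_labels w h (canonical_pattern n u v) = tau n v"
proof -
  have "0 < w" "0 < h"
    unfolding w_def h_def by auto
  then show "valid_pattern {t. t = determined_tile n (LEFT t) (BOTTOM t)} w h (canonical_pattern n u v)"
    unfolding valid_pattern_def
  proof (intro conjI allI impI)
    fix i j assume "i + 1 < w" "j < h"
    then show "RIGHT (canonical_pattern n u v i j) = LEFT (canonical_pattern n u v (i + 1) j)"
      using LEFT_canonical_pattern[OF assms(1,2), of j "i + 1"] unfolding h_def by simp
  next
    fix i j assume "i < w" "j + 1 < h"
    then show "TOP (canonical_pattern n u v i j) = BOTTOM (canonical_pattern n u v i (j + 1))"
      using BOTTOM_canonical_pattern[OF assms(1,2), of i "j + 1"] unfolding w_def by simp
  qed (use canonical_pattern_determined in auto)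
  show "left_labels w h (canonical_pattern n u v) = tau n u"
    using LEFT_canonical_pattern[OF assms(1,2), of _ 0]
    unfolding left_labels_def h_def by (auto intro: nth_equalityI)
  show "bottom_labels w h (canonical_pattern n u v) = tau n v"
    using BOTTOM_canonical_pattern[OF assms(1,2), of _ 0]
    unfolding bottom_labels_def w_def by (auto intro: nth_equalityI)
qed

lemma RIGHT_canonical_pattern_last:
  assumes "(u0, u1, u2) \<in> Vn n" "(v0, v1, v2) \<in> Vn n" "n \<ge> 1"
  shows "RIGHT (canonical_pattern n (u0, u1, u2) (v0, v1, v2) (length (tau n (v0, v1, v2)) - 1) j) =
    (if j = 0 then (0, of_bool (v2 \<le> int n), int n + 1 - v1)
     else (1, 1, int n - v0 + 1 + of_bool (int j > u2 - u0)))"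
  using assms length_tau[OF assms(2,3)]
  by (auto simp: canonical_pattern.simps Let_def RIGHT_def Vn_def)

fun right_fit :: "nat \<Rightarrow> label \<Rightarrow> label \<Rightarrow> label \<Rightarrow> bool" where
  "right_fit n (a0, a1, a2) (u0, u1, u2) (v0, v1, v2) \<longleftrightarrow>
     a0 = u0 \<and> a0 - a1 + 1 = of_bool (v2 \<le> int n) \<and> of_bool (a2 = a0) = 1 - v1 \<and>
     (\<forall>j. 0 < j \<and> j \<le> int n - u0 \<longrightarrow> of_bool (a2 - a0 \<le> j) + v0 = 1 + of_bool (u2 - u0 < j))"

lemma canonical_right_labels_iff:
  assumes "\<alpha> \<in> Vn n" "u \<in> Vn n" "v \<in> Vn n" "n \<ge> 1"
  shows "right_labels (length (tau n v)) (length (tau n u)) (canonical_pattern n u v) = tau n \<alpha>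
    \<longleftrightarrow> right_fit n \<alpha> u v"
proof -
  obtain a0 a1 a2 where a: "\<alpha> = (a0, a1, a2)" by (cases \<alpha>)
  obtain u0 u1 u2 where u: "u = (u0, u1, u2)" by (cases u)
  obtain v0 v1 v2 where v: "v = (v0, v1, v2)" by (cases v)
  define agrees where
    "agrees j \<longleftrightarrow> RIGHT (canonical_pattern n u v (length (tau n v) - 1) j) = tau n \<alpha> ! j" for j
  have bounds: "0 \<le> int n - u0" "0 \<le> a0" "a0 \<le> 1" "0 \<le> u0" "u0 \<le> 1"
    using assms unfolding a u Vn_def by auto
  have "right_labels (length (tau n v)) (length (tau n u)) (canonical_pattern n u v) = tau n \<alpha> \<longleftrightarrow>
    a0 = u0 \<and> (\<forall>j < nat (int n - u0 + 1). agrees j)"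
    using bounds length_tau[OF assms(1)[unfolded a] assms(4)] length_tau[OF assms(2)[unfolded u] assms(4)]
    unfolding a u agrees_def by (auto simp: list_eq_iff_nth_eq right_labels_def algebra_simps)
  also have "\<dots> \<longleftrightarrow> a0 = u0 \<and> agrees 0 \<and> (\<forall>j. 0 < j \<and> j \<le> int n - u0 \<longrightarrow> agrees (nat j))"
    using all_less_nat_succ_iff[OF bounds(1)] by blast
  also have "\<dots> \<longleftrightarrow> right_fit n \<alpha> u v"
  proof -
    have "agrees 0 \<longleftrightarrow> a0 - a1 + 1 = of_bool (v2 \<le> int n) \<and> of_bool (a2 = a0) = 1 - v1"
      using RIGHT_canonical_pattern_last nth_tau[of a0 a1 a2 n 0] assms
      unfolding agrees_def a u v by auto
    moreover have "agrees (nat j) \<longleftrightarrow> of_bool (a2 - a0 \<le> j) + v0 = 1 + of_bool (u2 - u0 < j)"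
      if "a0 = u0" "0 < j" "j \<le> int n - u0" for j
      using RIGHT_canonical_pattern_last nth_tau[of a0 a1 a2 n "nat j"] length_tau assms that
      unfolding agrees_def a u v by auto
    ultimately show ?thesis
      unfolding a u v by auto
  qed
  finally show ?thesis .
qed

lemma canonical_top_labels_iff:
  assumes "\<beta> \<in> Vn n" "u \<in> Vn n" "v \<in> Vn n" "n \<ge> 1"
  shows "top_labels (length (tau n v)) (length (tau n u)) (canonical_pattern n u v) = tau n \<beta>
    \<longleftrightarrow> right_fit n \<beta> v u"
proof -
  have "top_labels (length (tau n v)) (length (tau n u)) (canonical_pattern n u v) =
    right_labels (length (tau n u)) (length (tau n v)) (canonical_pattern n v u)"
    by (simp add: top_labels_def right_labels_def canonical_pattern_swap[of n u v])
  then show ?thesis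
    using canonical_right_labels_iff[OF assms(1,3,2,4)] by simp
qed

lemma right_fit_if_in_Tn': "(\<alpha>, \<beta>, u, v) \<in> Tn' n \<Longrightarrow> right_fit n \<alpha> u v"
  unfolding Tn'_def
  by (elim UnE) (auto simp: Wn_def Bn'_def Gn_def Yn_def An_def Jn'_def hat_def)

lemma Jn'_if_right_fits:
  assumes "(a0, a1, a2) \<in> Vn n" "(b0, b1, b2) \<in> Vn n" "(0, u1, u2) \<in> Vn n" "(0, v1, v2) \<in> Vn n"
    and "n \<ge> 1"
    and "right_fit n (a0, a1, a2) (0, u1, u2) (0, v1, v2)"
    and "right_fit n (b0, b1, b2) (0, v1, v2) (0, u1, u2)"
  shows "((a0, a1, a2), (b0, b1, b2), (0, u1, u2), (0, v1, v2)) \<in> Jn' n"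
proof -
  have "of_bool (a2 \<le> j) = (1 :: int) + of_bool (u2 < j)" "of_bool (b2 \<le> j) = (1 :: int) + of_bool (v2 < j)"
    if "0 < j" "j \<le> int n" for j
    using assms(6,7) that unfolding right_fit.simps by (metis add_0_right diff_zero)+
  from this[of 1] this[of "int n"] have "a2 \<le> 1" "u2 \<ge> int n" "b2 \<le> 1" "v2 \<ge> int n"
    using \<open>n \<ge> 1\<close> by (auto simp: of_bool_def split: if_splits)
  with assms(1-7) show ?thesis
    unfolding Jn'_def Vn_def by (auto simp: of_bool_def split: if_splits)
qed

lemma Wn_if_right_fits:
  assumes "(a0, a1, a2) \<in> Vn n" "(b0, b1, b2) \<in> Vn n" "(1, u1, u2) \<in> Vn n" "(1, v1, v2) \<in> Vn n"
    and "right_fit n (a0, a1, a2) (1, u1, u2) (1, v1, v2)"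
    and "right_fit n (b0, b1, b2) (1, v1, v2) (1, u1, u2)"
  shows "((a0, a1, a2), (b0, b1, b2), (1, u1, u2), (1, v1, v2)) \<in> Wn n"
proof -
  have ones: "a0 = 1" "a1 = 1" "b0 = 1" "b1 = 1" "u1 = 1" "v1 = 1"
    using assms unfolding Vn_def by auto
  then have "u2 \<le> int n" "v2 \<le> int n" "a2 \<noteq> 1" "b2 \<noteq> 1"
    using assms(5,6) by (auto simp: of_bool_def split: if_splits)
  then have bounds: "2 \<le> a2" "a2 \<le> int n + 1" "2 \<le> b2" "b2 \<le> int n + 1"
    "1 \<le> u2" "u2 \<le> int n" "1 \<le> v2" "v2 \<le> int n"
    using assms(1-4) ones unfolding Vn_def by auto
  have "a2 - 1 \<le> j \<longleftrightarrow> u2 \<le> j" if "0 < j" "j \<le> int n - 1" for j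
    using assms(5) that ones by (auto simp: of_bool_def split: if_splits)
  then have "a2 - 1 = u2"
    by (rule threshold_eq[where m = "int n - 1"]) (use bounds in auto)
  have "b2 - 1 \<le> j \<longleftrightarrow> v2 \<le> j" if "0 < j" "j \<le> int n - 1" for j
    using assms(6) that ones by (auto simp: of_bool_def split: if_splits)
  then have "b2 - 1 = v2"
    by (rule threshold_eq[where m = "int n - 1"]) (use bounds in auto)
  with \<open>a2 - 1 = u2\<close> bounds ones show ?thesis
    unfolding Wn_def by auto
qed

lemma edge_tile_if_right_fits:
  assumes "(a0, a1, a2) \<in> Vn n" "(b0, b1, b2) \<in> Vn n" "(0, u1, u2) \<in> Vn n" "(1, v1, v2) \<in> Vn n"
    and "n \<ge> 1"
    and "right_fit n (a0, a1, a2) (0, u1, u2) (1, v1, v2)"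
    and "right_fit n (b0, b1, b2) (1, v1, v2) (0, u1, u2)"
  shows "((a0, a1, a2), (b0, b1, b2), (0, u1, u2), (1, v1, v2)) \<in> Bn' n \<union> Gn n \<union> Yn n \<union> An n"
proof -
  have firsts: "a0 = 0" "b0 = 1" "b1 = 1" "v1 = 1"
    using assms unfolding Vn_def by auto
  then have "u2 \<le> int n" "a2 \<noteq> 0"
    using assms(6,7) by (auto simp: of_bool_def split: if_splits)
  have bounds: "1 \<le> a2" "a2 \<le> int n + 1" "0 \<le> u2"
    using \<open>a2 \<noteq> 0\<close> assms(1,3) firsts unfolding Vn_def by auto
  have "a2 \<le> j \<longleftrightarrow> u2 + 1 \<le> j" if "0 < j" "j \<le> int n" for j
    using assms(6) that firsts by (auto simp: of_bool_def split: if_splits)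
  then have "a2 = u2 + 1"
    by (rule threshold_eq[where m = "int n"]) (use bounds \<open>u2 \<le> int n\<close> in auto)
  have "b2 - 1 \<le> j \<and> j \<le> v2 - 1" if "0 < j" "j \<le> int n - 1" for j
    using assms(7) that firsts by (auto simp: of_bool_def split: if_splits)
  from this[of 1] this[of "int n - 1"] have "b2 \<le> 2" "v2 \<ge> int n"
    using assms(2,4,5) firsts unfolding Vn_def by (cases "n \<ge> 2"; auto)+
  with \<open>a2 = u2 + 1\<close> \<open>u2 \<le> int n\<close> assms(1-7) firsts show ?thesis
    unfolding Bn'_def Gn_def Yn_def An_def Vn_def
    by (auto simp: of_bool_def split: if_splits)
qed

lemma Tn'_if_right_fits:
  assumes "\<alpha> \<in> Vn n" "\<beta> \<in> Vn n" "u \<in> Vn n" "v \<in> Vn n" "n \<ge> 1"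
    and "right_fit n \<alpha> u v" "right_fit n \<beta> v u"
  shows "(\<alpha>, \<beta>, u, v) \<in> Tn' n"
proof -
  obtain a0 a1 a2 b0 b1 b2 u0 u1 u2 v0 v1 v2
    where tuples: "\<alpha> = (a0, a1, a2)" "\<beta> = (b0, b1, b2)" "u = (u0, u1, u2)" "v = (v0, v1, v2)"
    by (cases \<alpha>; cases \<beta>; cases u; cases v) auto
  have "u0 = 0 \<or> u0 = 1" "v0 = 0 \<or> v0 = 1"
    using assms(3,4) unfolding tuples Vn_def by auto
  then consider "u0 = 0" "v0 = 0" | "u0 = 0" "v0 = 1" | "u0 = 1" "v0 = 0" | "u0 = 1" "v0 = 1"
    by blast
  then show ?thesis
  proof cases
    case 1
    then show ?thesis
      using Jn'_if_right_fits assms unfolding tuples Tn'_def by blast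
  next
    case 2
    then show ?thesis
      using edge_tile_if_right_fits assms unfolding tuples Tn'_def by blast
  next
    case 3
    then have "(\<beta>, \<alpha>, v, u) \<in> Tn' n"
      using edge_tile_if_right_fits assms unfolding tuples Tn'_def by blast
    then show ?thesis
      by (simp add: swapped_tile_in_Tn'_iff)
  next
    case 4
    then show ?thesis
      using Wn_if_right_fits assms unfolding tuples Tn'_def by blast
  qed
qed

lemma canonical_pattern_in_Tn':
  assumes "u \<in> Vn n" "v \<in> Vn n" "right_fit n \<alpha> u v" "right_fit n \<beta> v u"
    and "i < length (tau n v)" "j < length (tau n u)" "n \<ge> 1"
  shows "canonical_pattern n u v i j \<in> Tn' n"
proof -
  obtain a0 a1 a2 b0 b1 b2 u0 u1 u2 v0 v1 v2
    where tuples: "\<alpha> = (a0, a1, a2)" "\<beta> = (b0, b1, b2)" "u = (u0, u1, u2)" "v = (v0, v1, v2)"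
    by (cases \<alpha>; cases \<beta>; cases u; cases v) auto
  have i: "int i \<le> int n - v0" and j: "int j \<le> int n - u0"
    using assms(5-7) length_tau assms(1,2) unfolding tuples by auto
  consider "i = 0" "j = 0" | "0 < i" "j = 0" | "i = 0" "0 < j" | "0 < i" "0 < j"
    by blast
  then show ?thesis
  proof cases
    case 1
    have "canonical_pattern n u v i j \<in> Jn' n"
      using 1 assms(1,2) unfolding tuples Jn'_def Vn_def
      by (auto simp: canonical_pattern.simps Let_def)
    then show ?thesis unfolding Tn'_def by blast
  next
    case 2
    have "canonical_pattern n u v i j \<in> Bn' n \<union> Gn n \<union> Yn n \<union> An n"
      using 2 i assms(1,2) unfolding tuples Bn'_def Gn_def Yn_def An_def Vn_def
      by (auto simp: canonical_pattern.simps Let_def)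
    then show ?thesis unfolding Tn'_def by blast
  next
    case 3
    have "canonical_pattern n v u j i \<in> Bn' n \<union> Gn n \<union> Yn n \<union> An n"
      using 3 j assms(1,2) unfolding tuples Bn'_def Gn_def Yn_def An_def Vn_def
      by (auto simp: canonical_pattern.simps Let_def)
    then show ?thesis
      unfolding canonical_pattern_swap[of n u v] Tn'_def by blast
  next
    case 4
    have "of_bool (a2 - a0 \<le> int j) + v0 = 1 + of_bool (u2 - u0 < int j)"
      "of_bool (b2 - b0 \<le> int i) + u0 = 1 + of_bool (v2 - v0 < int i)"
      using assms(3,4) i j \<open>0 < i\<close> \<open>0 < j\<close> unfolding tuples right_fit.simps
      by (metis of_nat_0_less_iff)+
    then have "of_bool (u2 - u0 < int j) \<le> v0" "of_bool (v2 - v0 < int i) \<le> u0"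
      by (auto simp: of_bool_def split: if_splits)
    then have "canonical_pattern n u v i j \<in> Wn n"
      using 4 i j unfolding tuples Wn_def by (auto simp: canonical_pattern.simps Let_def)
    then show ?thesis unfolding Tn'_def by blast
  qed
qed

lemma canonical_labels_iff_Tn':
  assumes "\<alpha> \<in> Vn n" "\<beta> \<in> Vn n" "u \<in> Vn n" "v \<in> Vn n" "n \<ge> 1"
  defines "w \<equiv> length (tau n v)" and "h \<equiv> length (tau n u)"
  shows "right_labels w h (canonical_pattern n u v) = tau n \<alpha> \<and>
      top_labels w h (canonical_pattern n u v) = tau n \<beta> \<longleftrightarrow> (\<alpha>, \<beta>, u, v) \<in> Tn' n"
  using canonical_right_labels_iff[OF assms(1,3,4,5)] canonical_top_labels_iff[OF assms(2,3,4,5)]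
    Tn'_if_right_fits[OF assms(1-5)] right_fit_if_in_Tn'[of \<alpha> \<beta> u v n]
    right_fit_if_in_Tn'[of \<beta> \<alpha> v u n] swapped_tile_in_Tn'_iff
  unfolding w_def h_def by blast

lemma canonical_pattern_valid_if_Tn':
  assumes "(\<alpha>, \<beta>, u, v) \<in> Tn' n" "u \<in> Vn n" "v \<in> Vn n" "n \<ge> 1"
  shows "valid_pattern (Tn' n) (length (tau n v)) (length (tau n u)) (canonical_pattern n u v)"
proof (rule valid_pattern_restrict[OF canonical_pattern_valid(1)[OF assms(2-4)]])
  have "right_fit n \<alpha> u v" "right_fit n \<beta> v u"
    using assms(1) right_fit_if_in_Tn' swapped_tile_in_Tn'_iff by blast+
  then show "canonical_pattern n u v i j \<in> Tn' n"
    if "i < length (tau n v)" "j < length (tau n u)" for i j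
    using canonical_pattern_in_Tn'[OF assms(2,3)] that assms(4) by blast
qed

lemma Tn'_pattern_labels_eq_canonical:
  assumes P: "valid_pattern (Tn' n) w h P"
    and left: "left_labels w h P = tau n u" and bottom: "bottom_labels w h P = tau n v"
    and "u \<in> Vn n" "v \<in> Vn n" "n \<ge> 1"
  shows "w = length (tau n v)" "h = length (tau n u)"
    and "right_labels w h P = right_labels w h (canonical_pattern n u v)"
    and "top_labels w h P = top_labels w h (canonical_pattern n u v)"
proof -
  show size: "w = length (tau n v)" "h = length (tau n u)"
    using left bottom by (metis length_left_labels length_bottom_labels)+
  note C = canonical_pattern_valid[OF assms(4-6), folded size]
  have "P i j = canonical_pattern n u v i j" if "i < w" "j < h" for i j
    using valid_patterns_agree[OF sw_deterministic_graph valid_pattern_mono[OF Tn'_determined_by_left_bottom P] C(1)]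
      C(2,3) left bottom that by simp
  moreover have "0 < w" "0 < h"
    using P unfolding valid_pattern_def by simp_all
  ultimately show "right_labels w h P = right_labels w h (canonical_pattern n u v)"
    and "top_labels w h P = top_labels w h (canonical_pattern n u v)"
    using agreeing_patterns_labels_eq by blast+
qed

theorem proposition5p9:
  fixes n :: nat and \<alpha> \<beta> u v :: label
  assumes "n \<ge> 1"
    and "\<alpha> \<in> Vn n" and "\<beta> \<in> Vn n" and "u \<in> Vn n" and "v \<in> Vn n"
  shows "(\<exists>w h P. valid_pattern (Tn' n) w h P \<and>
            right_labels w h P = tau n \<alpha> \<and> top_labels w h P = tau n \<beta> \<and>
            left_labels w h P = tau n u \<and> bottom_labels w h P = tau n v)
         \<longleftrightarrow> (\<alpha>, \<beta>, u, v) \<in> Tn' n"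
proof
  assume "\<exists>w h P. valid_pattern (Tn' n) w h P \<and>
            right_labels w h P = tau n \<alpha> \<and> top_labels w h P = tau n \<beta> \<and>
            left_labels w h P = tau n u \<and> bottom_labels w h P = tau n v"
  then obtain w h P where "valid_pattern (Tn' n) w h P"
    and "right_labels w h P = tau n \<alpha>" "top_labels w h P = tau n \<beta>"
    and "left_labels w h P = tau n u" "bottom_labels w h P = tau n v"
    by blast
  with Tn'_pattern_labels_eq_canonical[OF this(1,4,5) assms(4,5,1)] show "(\<alpha>, \<beta>, u, v) \<in> Tn' n"
    using canonical_labels_iff_Tn'[OF assms(2-5,1)] by simp
next
  assume "(\<alpha>, \<beta>, u, v) \<in> Tn' n"
  then show "\<exists>w h P. valid_pattern (Tn' n) w h P \<and>
            right_labels w h P = tau n \<alpha> \<and> top_labels w h P = tau n \<beta> \<and>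
            left_labels w h P = tau n u \<and> bottom_labels w h P = tau n v"
    using canonical_pattern_valid_if_Tn'[OF _ assms(4,5,1)] canonical_pattern_valid(2,3)[OF assms(4,5,1)]
      canonical_labels_iff_Tn'[OF assms(2-5,1)] by blast
qed

end
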